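(* The probability of miss-detection $p_{miss}=F(\gamma|2N_RL,2N_RL(N_s-1),L\eta)$ satisfies \[ \lim_{L\uparrow \infty} -\frac{1}{L}\log p_{miss} = \begin{cases} I^*(\eta,\gamma), & \gamma<\frac{2N_R+\eta}{2N_R(N_s-1)} \\ 0, & \text{otherwise} \end{cases} \] where $I^*(\eta,\gamma)$ is the rate function given by \[ I^*(\eta,\gamma) = \frac{\eta}{2} \left(1-\frac{\gamma v^*}{N_R + \sqrt{N_R^2+\gamma \eta v^*}}\right) + N_R(N_s-1)\log \frac{2N_R(N_s-1)}{v^*} - N_R\log \frac{\gamma v^*}{N_R + \sqrt{N_R^2+\gamma \eta v^*}}. \] Here $v^*= \frac{x^{*2}-N_R^2}{\eta\gamma}$ and $x^*>0$ is a solution to the equation \[ \frac{\gamma+1}{\eta\gamma}(x^2-N_R^2) - x - N_R -2N_R(N_s-1) = 0. \] Moreover, when $\gamma<\frac{2N_R+\eta}{2N_R(N_s-1)}$, $I^*(\eta,\gamma)$ is monotonically increasing in $\eta$.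
   Context: A UE with $N_R$ receive antennas detects a base-station reference signal (RS) of $N_s$ samples over $L$ slots using a GLRT statistic $L_G(\tau)$, compared to a threshold $\gamma>0$. Under the signal-present hypothesis, $(N_s-1)L_G(\tau)$ follows a non-central F-distribution with degrees of freedom $2N_RL$ and $2N_RL(N_s-1)$ and non-centrality parameter $\lambda = L\eta$, where $\eta=\lambda/L>0$ is the normalised non-centrality parameter (proportional to the average effective channel/beamforming gain, $\eta = \frac{2P_T N_s}{\sigma^2}\cdot\frac{1}{L}\sum_{l=1}^L\|\mathbf{h}_l\|_2^2$, with $P_T$ the average transmit power, $\sigma^2$ the noise variance and $\mathbf{h}_l$ the effective channel in slot $l$), held fixed as $L$ grows. $F(x|n_1,n_2,\lambda)$ denotes the CDF of the non-central F-distribution with degrees of freedom $n_1,n_2$ and non-centrality parameter $\lambda$, and the miss-detection probability is $p_{miss}=F(\gamma|2N_RL,2N_RL(N_s-1),L\eta)$. *)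

theory Defs
  imports "HOL-Analysis.Analysis"
begin

definition chi2_density :: "real \<Rightarrow> real \<Rightarrow> real" where
  "chi2_density k x =
     (if x > 0 then x powr (k/2 - 1) * exp (- x/2) / (2 powr (k/2) * Gamma (k/2)) else 0)"

definition nc_chi2_density :: "real \<Rightarrow> real \<Rightarrow> real \<Rightarrow> real" where
  "nc_chi2_density k lam x =
     (\<Sum>j. exp (- lam/2) * (lam/2) ^ j / fact j * chi2_density (k + 2 * real j) x)"

text \<open>CDF F(x | n1, n2, lam) of the (standard) non-central F-distribution, i.e. of
  (X1/n1)/(X2/n2) with X1 ~ non-central chi-square(n1, lam), X2 ~ chi-square(n2) independent:
  P((X1/n1)/(X2/n2) \<le> x) = P(X1 \<le> x * n1/n2 * X2).\<close>
definition ncF_cdf :: "real \<Rightarrow> real \<Rightarrow> real \<Rightarrow> real \<Rightarrow> real" where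
  "ncF_cdf x n1 n2 lam =
     (\<integral>b. chi2_density n2 b *
            (\<integral>a. indicator {..x * n1 / n2 * b} a * nc_chi2_density n1 lam a \<partial>lborel) \<partial>lborel)"

text \<open>Miss-detection probability: P(L_G \<le> gamma) where (N_s-1) L_G is non-central F with
  dof 2 N_R L, 2 N_R L (N_s-1) and non-centrality L eta.\<close>
definition p_miss :: "nat \<Rightarrow> nat \<Rightarrow> nat \<Rightarrow> real \<Rightarrow> real \<Rightarrow> real" where
  "p_miss NR Ns L eta gamma =
     ncF_cdf ((real Ns - 1) * gamma) (2 * real NR * real L)
             (2 * real NR * real L * (real Ns - 1)) (real L * eta)"

definition xstar :: "nat \<Rightarrow> nat \<Rightarrow> real \<Rightarrow> real \<Rightarrow> real" where
  "xstar NR Ns eta gamma =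
     (THE x. x > 0 \<and> (gamma + 1) / (eta * gamma) * (x^2 - (real NR)^2) - x - real NR
                        - 2 * real NR * (real Ns - 1) = 0)"

definition vstar :: "nat \<Rightarrow> nat \<Rightarrow> real \<Rightarrow> real \<Rightarrow> real" where
  "vstar NR Ns eta gamma = ((xstar NR Ns eta gamma)^2 - (real NR)^2) / (eta * gamma)"

definition Istar :: "nat \<Rightarrow> nat \<Rightarrow> real \<Rightarrow> real \<Rightarrow> real" where
  "Istar NR Ns eta gamma =
     (let v = vstar NR Ns eta gamma;
          q = gamma * v / (real NR + sqrt ((real NR)^2 + gamma * eta * v))
      in eta / 2 * (1 - q)
         + real NR * (real Ns - 1) * ln (2 * real NR * (real Ns - 1) / v)
         - real NR * ln q)"

end

theory Submission
  imports Defs "HOL-Probability.Distributions" "HOL-Real_Asymp.Real_Asymp"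
begin

text \<open>
  With \<open>m\<^sub>1 = N\<^sub>R L\<close> and \<open>m\<^sub>2 = N\<^sub>R (N\<^sub>s - 1) L\<close>, the miss probability is \<open>P(X\<^sub>1 \<le> \<gamma> X\<^sub>2)\<close> for
  independent \<open>X\<^sub>1\<close>, non-central \<open>\<chi>\<^sup>2\<close> with \<open>2m\<^sub>1\<close> degrees of freedom and non-centrality \<open>L\<eta>\<close>,
  and \<open>X\<^sub>2\<close>, central \<open>\<chi>\<^sup>2\<close> with \<open>2m\<^sub>2\<close> degrees of freedom. Even-order \<open>\<chi>\<^sup>2\<close> laws are Erlang
  laws, whose CDFs are Poisson tails, and \<open>X\<^sub>1\<close> is a Poisson\<open>(L\<eta>/2)\<close> mixture of them.

  The Chernoff bound \<open>P(X\<^sub>1 \<le> \<gamma> X\<^sub>2) \<le> E exp(t(\<gamma> X\<^sub>2 - X\<^sub>1))\<close> shows that the rate is at least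
  \<open>\<phi>(t)\<close> for every admissible \<open>t \<ge> 0\<close>, where \<open>\<phi>\<close> is a concave Chernoff exponent. Conversely,
  \<open>p\<^sub>m\<^sub>i\<^sub>s\<^sub>s\<close> is at least the probability that the mixture index is \<open>j \<approx> cL\<close>, \<open>X\<^sub>1 \<le> aL\<close> and
  \<open>X\<^sub>2 > bL\<close> (with \<open>a \<le> \<gamma> b\<close>); these are single Poisson weights, whose rates
  \<open>\<alpha> - \<kappa> + \<kappa> log(\<kappa>/\<alpha>)\<close> follow from a Stirling bound. Below the threshold the maximiser \<open>t\<^sup>*\<close>
  of \<open>\<phi>\<close> is positive and explicit in terms of \<open>x\<^sup>*\<close>, \<open>\<phi>(t\<^sup>*) = I\<^sup>*\<close>, and a suitable choice of
  \<open>c, a, b\<close> makes both rates agree; above it \<open>t = 0\<close> and the typical values of the three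
  variables give rate \<open>0\<close>. Finally \<open>\<phi>\<close> increases with \<open>\<eta>\<close> for \<open>t > 0\<close>, hence so does
  \<open>I\<^sup>* = max \<phi>\<close>.
\<close>

section \<open>Poisson weights\<close>

definition poisson_weight :: "real \<Rightarrow> nat \<Rightarrow> real" where
  "poisson_weight mu n = mu ^ n * exp (- mu) / fact n"

lemma poisson_weight_nonneg: "mu \<ge> 0 \<Longrightarrow> poisson_weight mu n \<ge> 0"
  unfolding poisson_weight_def by simp

lemma poisson_weight_pos: "mu > 0 \<Longrightarrow> poisson_weight mu n > 0"
  unfolding poisson_weight_def by simp

lemma poisson_weight_power_sums: "(\<lambda>n. poisson_weight mu n * z ^ n) sums exp (mu * (z - 1))"
proof -
  have "(\<lambda>n. (mu * z) ^ n / fact n) sums exp (mu * z)"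
    using exp_converges[of "mu * z"] by (simp add: divide_inverse mult.commute scaleR_conv_of_real)
  from sums_mult[OF this, of "exp (- mu)"] show ?thesis
    unfolding poisson_weight_def by (simp add: power_mult_distrib mult_exp_exp algebra_simps)
qed

lemma poisson_weight_sums: "poisson_weight mu sums 1"
  using poisson_weight_power_sums[of mu 1] by simp

lemma sum_poisson_weight_le_1:
  assumes "finite N" and "mu \<ge> 0"
  shows "(\<Sum>n\<in>N. poisson_weight mu n) \<le> 1"
  using sum_le_suminf[OF sums_summable[OF poisson_weight_sums] assms(1)]
    sums_unique[OF poisson_weight_sums] poisson_weight_nonneg assms(2) by simp

lemma poisson_weight_le_1: "mu \<ge> 0 \<Longrightarrow> poisson_weight mu n \<le> 1"
  using sum_poisson_weight_le_1[of "{n}"] by simp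

lemma exp_one_le_one_plus_inverse_power:
  assumes "m > 0"
  shows "exp 1 \<le> (1 + 1 / real m) ^ Suc m"
proof -
  have "1 \<le> (real m + 1) * ln (1 + 1 / real m)"
  proof -
    have "ln (real m / (real m + 1)) \<le> real m / (real m + 1) - 1"
      using assms by (intro ln_le_minus_one) simp
    moreover have "ln (1 + 1 / real m) = - ln (real m / (real m + 1))"
      using assms by (simp add: ln_div field_simps)
    ultimately show ?thesis
      using assms by (simp add: field_simps)
  qed
  also have "(real m + 1) * ln (1 + 1 / real m) = ln ((1 + 1 / real m) ^ Suc m)"
    using assms by (simp add: ln_realpow add_pos_nonneg del: power_Suc)
  finally show ?thesis
    using assms by (simp add: ln_ge_iff add_pos_nonneg)
qed

text \<open>A crude Stirling bound, tight enough to give the exact exponential rate of Poisson weights.\<close>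
lemma fact_le_power_exp: "fact n \<le> (real n + 1) ^ Suc n * exp (- real n)"
proof (induction n)
  case 0
  then show ?case by simp
next
  case (Suc n)
  have exp_step: "exp 1 * (real n + 1) ^ Suc (Suc n) \<le> (real n + 2) ^ Suc (Suc n)"
  proof -
    have "exp 1 \<le> (1 + 1 / real (Suc n)) ^ Suc (Suc n)"
      by (rule exp_one_le_one_plus_inverse_power) simp
    also have "\<dots> = (real n + 2) ^ Suc (Suc n) / (real n + 1) ^ Suc (Suc n)"
      by (simp add: field_simps power_divide)
    finally show ?thesis
      by (simp add: pos_le_divide_eq mult.commute)
  qed
  have "fact (Suc n) = (real n + 1) * fact n"
    by simp
  also have "\<dots> \<le> (real n + 1) * ((real n + 1) ^ Suc n * exp (- real n))"
    using Suc.IH by (intro mult_left_mono) auto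
  also have "\<dots> = exp (- real (Suc n)) * (exp 1 * (real n + 1) ^ Suc (Suc n))"
    by (simp add: exp_diff exp_minus field_simps)
  also have "\<dots> \<le> exp (- real (Suc n)) * (real n + 2) ^ Suc (Suc n)"
    using exp_step by (intro mult_left_mono) auto
  finally show ?case
    by (simp add: mult.commute add.commute)
qed

definition poisson_exponent :: "real \<Rightarrow> nat \<Rightarrow> real" where
  "poisson_exponent mu n = mu - real n * ln mu + (real n + 1) * ln (real n + 1) - real n"

lemma ln_poisson_weight_ge:
  assumes "mu > 0"
  shows "- poisson_exponent mu n \<le> ln (poisson_weight mu n)"
proof -
  have "ln (fact n) \<le> ln ((real n + 1) ^ Suc n * exp (- real n))"
    using fact_le_power_exp[of n] by (subst ln_le_cancel_iff) auto
  also have "\<dots> = (real n + 1) * ln (real n + 1) - real n"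
    by (simp add: ln_mult ln_realpow add_pos_nonneg del: power_Suc)
  finally show ?thesis
    using assms unfolding poisson_exponent_def poisson_weight_def
    by (simp add: ln_div ln_mult ln_realpow)
qed

definition poisson_rate :: "real \<Rightarrow> real \<Rightarrow> real" where
  "poisson_rate alpha kappa = alpha - kappa + kappa * ln (kappa / alpha)"

lemma tendsto_ratio_of_bounded_diff:
  fixes n :: "nat \<Rightarrow> nat"
  assumes "\<And>L. \<bar>real (n L) - kappa * real L\<bar> \<le> C"
  shows "(\<lambda>L. real (n L) / real L) \<longlonglongrightarrow> kappa"
proof -
  have "(\<lambda>L. real (n L) / real L - kappa) \<longlonglongrightarrow> 0"
  proof (rule Lim_null_comparison)
    show "\<forall>\<^sub>F L in sequentially. norm (real (n L) / real L - kappa) \<le> C / real L"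
    proof (rule eventually_sequentiallyI[of 1])
      fix L :: nat
      assume "L \<ge> 1"
      then have "real (n L) / real L - kappa = (real (n L) - kappa * real L) / real L"
        by (simp add: field_simps)
      with assms[of L] show "norm (real (n L) / real L - kappa) \<le> C / real L"
        by (simp add: abs_divide divide_right_mono)
    qed
    show "(\<lambda>L. C / real L) \<longlonglongrightarrow> 0"
      by real_asymp
  qed
  then show ?thesis
    by (simp add: LIM_zero_iff)
qed

lemma tendsto_poisson_exponent:
  fixes n :: "nat \<Rightarrow> nat"
  assumes ratio: "(\<lambda>L. real (n L) / real L) \<longlonglongrightarrow> kappa" and "kappa > 0" and "alpha > 0"
  shows "(\<lambda>L. poisson_exponent (alpha * real L) (n L) / real L) \<longlonglongrightarrow> poisson_rate alpha kappa"
proof -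
  define r where "r L = (real (n L) + 1) / real L" for L
  have "(\<lambda>L::nat. 1 / real L) \<longlonglongrightarrow> 0"
    by real_asymp
  then have r: "r \<longlonglongrightarrow> kappa"
    unfolding r_def add_divide_distrib using tendsto_add[OF ratio] by fastforce
  have ln_r: "(\<lambda>L. ln (r L)) \<longlonglongrightarrow> ln kappa"
    using r \<open>kappa > 0\<close> by (intro tendsto_ln) auto
  have expansion: "\<forall>\<^sub>F L in sequentially. poisson_exponent (alpha * real L) (n L) / real L =
      alpha - real (n L) / real L + real (n L) / real L * (ln (r L) - ln alpha)
      + ln (r L) / real L + ln (real L) / real L"
  proof (rule eventually_sequentiallyI[of 1])
    fix L :: nat
    assume "L \<ge> 1"
    then have "real L > 0" and ln_n: "ln (real (n L) + 1) = ln (r L) + ln (real L)"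
      by (simp_all add: r_def ln_div add_pos_nonneg)
    then have expand: "poisson_exponent (alpha * real L) (n L) = alpha * real L
        - real (n L) * (ln alpha + ln (real L)) + (real (n L) + 1) * (ln (r L) + ln (real L)) - real (n L)"
      using \<open>alpha > 0\<close> unfolding poisson_exponent_def ln_n by (simp add: ln_mult)
    show "poisson_exponent (alpha * real L) (n L) / real L =
        alpha - real (n L) / real L + real (n L) / real L * (ln (r L) - ln alpha)
        + ln (r L) / real L + ln (real L) / real L"
      unfolding expand using \<open>real L > 0\<close> by (simp add: field_simps)
  qed
  have "(\<lambda>L. ln (r L) / real L) \<longlonglongrightarrow> 0"
    using ln_r filterlim_at_top_imp_at_infinity[OF filterlim_real_sequentially]
    by (rule tendsto_divide_0)
  moreover have "(\<lambda>L. ln (real L) / real L) \<longlonglongrightarrow> 0"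
    by real_asymp
  ultimately have "(\<lambda>L. alpha - real (n L) / real L + real (n L) / real L * (ln (r L) - ln alpha)
      + ln (r L) / real L + ln (real L) / real L)
      \<longlonglongrightarrow> alpha - kappa + kappa * (ln kappa - ln alpha) + 0 + 0"
    by (intro tendsto_add tendsto_diff tendsto_mult tendsto_const ratio ln_r)
  then have "(\<lambda>L. poisson_exponent (alpha * real L) (n L) / real L)
      \<longlonglongrightarrow> alpha - kappa + kappa * (ln kappa - ln alpha)"
    using tendsto_cong[OF expansion] by simp
  then show ?thesis
    using \<open>kappa > 0\<close> \<open>alpha > 0\<close> unfolding poisson_rate_def by (simp add: ln_div)
qed

section \<open>Chi-square laws through Erlang laws\<close>

lemma erlang_density_eq_poisson_weight:
  "x \<ge> 0 \<Longrightarrow> erlang_density k l x = l * poisson_weight (l * x) k"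
  unfolding erlang_density_def poisson_weight_def by (simp add: power_mult_distrib)

lemma erlang_CDF_eq_poisson_weight:
  "x \<ge> 0 \<Longrightarrow> erlang_CDF k l x = 1 - (\<Sum>n\<le>k. poisson_weight (l * x) n)"
  unfolding erlang_CDF_def poisson_weight_def by simp

lemma erlang_CDF_le_1: "l \<ge> 0 \<Longrightarrow> erlang_CDF k l x \<le> 1"
  by (cases "x \<ge> 0") (auto simp: erlang_CDF_eq_poisson_weight erlang_CDF_def
      intro: sum_nonneg poisson_weight_nonneg)

lemma erlang_density_le:
  assumes "l \<ge> 0"
  shows "erlang_density k l x \<le> l"
proof (cases "x \<ge> 0")
  case True
  then show ?thesis
    using assms poisson_weight_le_1[of "l * x" k] mult_left_mono[of "poisson_weight (l * x) k" 1 l]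
    by (simp add: erlang_density_eq_poisson_weight)
qed (use assms in \<open>simp add: erlang_density_def\<close>)

lemma chi2_density_eq_erlang_density:
  assumes "n \<ge> 2"
  shows "chi2_density (2 * real n) x = erlang_density (n - 1) (1/2) x"
proof (cases "x > 0")
  case True
  have n: "real n = 1 + real (n - 1)"
    using assms by (simp add: of_nat_diff)
  have "x powr (real n - 1) = x ^ (n - 1)" and "Gamma (real n) = fact (n - 1)"
    using True by (simp_all add: n powr_realpow Gamma_fact del: of_nat_diff)
  moreover have "2 powr real n = 2 ^ n"
    by (simp add: powr_realpow)
  moreover have "Suc (n - 1) = n"
    using assms by simp
  ultimately show ?thesis
    using True unfolding chi2_density_def erlang_density_def
    by (simp add: power_one_over field_simps)
next
  case False
  with assms show ?thesis
    unfolding chi2_density_def erlang_density_def by (cases "x = 0") auto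
qed

text \<open>The CDF of the non-central \<open>\<chi>\<^sup>2\<close> law with \<open>2m\<close> degrees of freedom, a Poisson\<open>(\<lambda>/2)\<close>
  mixture of Erlang laws.\<close>
definition nc_chi2_CDF :: "nat \<Rightarrow> real \<Rightarrow> real \<Rightarrow> real" where
  "nc_chi2_CDF m lam y = (\<Sum>j. poisson_weight (lam / 2) j * erlang_CDF (m + j - 1) (1/2) y)"

lemma summable_poisson_weight_mult:
  assumes "mu \<ge> 0" and "\<And>j. \<bar>f j\<bar> \<le> C"
  shows "summable (\<lambda>j. poisson_weight mu j * f j)"
proof (rule summable_comparison_test)
  show "\<exists>N. \<forall>j\<ge>N. norm (poisson_weight mu j * f j) \<le> C * poisson_weight mu j"
    using assms poisson_weight_nonneg[OF assms(1)]
    by (auto simp: abs_mult mult.commute intro: mult_right_mono)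
  show "summable (\<lambda>j. C * poisson_weight mu j)"
    using poisson_weight_sums by (intro summable_mult sums_summable)
qed

lemma summable_nc_chi2_CDF:
  assumes "lam \<ge> 0"
  shows "summable (\<lambda>j. poisson_weight (lam / 2) j * erlang_CDF (m + j - 1) (1/2) y)"
proof (rule summable_poisson_weight_mult)
  show "lam / 2 \<ge> 0"
    using assms by simp
  show "\<bar>erlang_CDF (m + j - 1) (1/2) y\<bar> \<le> 1" for j
    using erlang_CDF_le_1[of "1/2" "m + j - 1" y] by simp
qed

lemma nc_chi2_CDF_term_nonneg:
  "lam \<ge> 0 \<Longrightarrow> poisson_weight (lam / 2) j * erlang_CDF k (1/2) y \<ge> 0"
  by (simp add: poisson_weight_nonneg)

lemma nc_chi2_CDF_nonneg: "lam \<ge> 0 \<Longrightarrow> nc_chi2_CDF m lam y \<ge> 0"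
  unfolding nc_chi2_CDF_def by (intro suminf_nonneg summable_nc_chi2_CDF nc_chi2_CDF_term_nonneg)

lemma borel_measurable_nc_chi2_CDF[measurable]: "nc_chi2_CDF m lam \<in> borel_measurable borel"
  unfolding nc_chi2_CDF_def[abs_def] erlang_CDF_def by measurable

lemma integral_nc_chi2_density_atMost:
  assumes m: "m \<ge> 2" and lam: "lam \<ge> 0"
  shows "(\<integral>a. indicator {..y} a * nc_chi2_density (2 * real m) lam a \<partial>lborel) = nc_chi2_CDF m lam y"
proof -
  define f where "f j a = poisson_weight (lam / 2) j * erlang_density (m + j - 1) (1/2) a" for j a
  have f_nonneg: "f j a \<ge> 0" for j a
    unfolding f_def using lam by (simp add: poisson_weight_nonneg)
  have summable_f: "summable (\<lambda>j. f j a)" for a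
    unfolding f_def using lam erlang_density_le[of "1/2"]
    by (intro summable_poisson_weight_mult[where C = "1/2"]) auto
  have density: "nc_chi2_density (2 * real m) lam a = (\<Sum>j. f j a)" for a
  proof -
    have "chi2_density (2 * real m + 2 * real j) a = erlang_density (m + j - 1) (1/2) a" for j
      using chi2_density_eq_erlang_density[of "m + j" a] m by simp
    then show ?thesis
      unfolding nc_chi2_density_def f_def poisson_weight_def by (simp add: mult_ac)
  qed
  have "(\<integral>\<^sup>+ a. ennreal (indicator {..y} a * (\<Sum>j. f j a)) \<partial>lborel)
      = (\<integral>\<^sup>+ a. (\<Sum>j. ennreal (f j a * indicator {..y} a)) \<partial>lborel)"
    using summable_f f_nonneg
    by (intro nn_integral_cong)
      (auto simp: suminf_ennreal2 summable_mult2 suminf_mult2[symmetric] mult.commute split: split_indicator)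
  also have "\<dots> = (\<Sum>j. \<integral>\<^sup>+ a. ennreal (f j a * indicator {..y} a) \<partial>lborel)"
    unfolding f_def by (rule nn_integral_suminf) measurable
  also have "\<dots> = (\<Sum>j. ennreal (poisson_weight (lam / 2) j * erlang_CDF (m + j - 1) (1/2) y))"
  proof (rule suminf_cong)
    fix j
    have "(\<integral>\<^sup>+ a. ennreal (f j a * indicator {..y} a) \<partial>lborel)
        = ennreal (poisson_weight (lam / 2) j) * (\<integral>\<^sup>+ a. ennreal (erlang_density (m + j - 1) (1/2) a) * indicator {..y} a \<partial>lborel)"
      unfolding f_def using lam
      by (subst nn_integral_cmult[symmetric]) (auto intro!: nn_integral_cong
          simp: poisson_weight_nonneg ennreal_mult split: split_indicator)
    then show "(\<integral>\<^sup>+ a. ennreal (f j a * indicator {..y} a) \<partial>lborel)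
        = ennreal (poisson_weight (lam / 2) j * erlang_CDF (m + j - 1) (1/2) y)"
      using lam by (simp add: nn_integral_erlang_density ennreal_mult poisson_weight_nonneg)
  qed
  also have "\<dots> = ennreal (nc_chi2_CDF m lam y)"
    unfolding nc_chi2_CDF_def using lam
    by (intro suminf_ennreal2 summable_nc_chi2_CDF nc_chi2_CDF_term_nonneg)
  finally have "(\<integral>\<^sup>+ a. ennreal (indicator {..y} a * (\<Sum>j. f j a)) \<partial>lborel) = ennreal (nc_chi2_CDF m lam y)" .
  moreover have "(\<lambda>a. \<Sum>j. f j a) \<in> borel_measurable lborel"
    unfolding f_def by measurable
  moreover have "(\<Sum>j. f j a) \<ge> 0" for a
    using summable_f f_nonneg by (rule suminf_nonneg)
  ultimately show ?thesis
    unfolding density using nc_chi2_CDF_nonneg[OF lam]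
    by (subst integral_eq_nn_integral) auto
qed

text \<open>\<open>P(X\<^sub>1 \<le> g X\<^sub>2)\<close> for independent \<open>X\<^sub>1\<close> non-central \<open>\<chi>\<^sup>2\<close> with \<open>2 m\<^sub>1\<close> degrees of freedom and
  non-centrality \<open>\<lambda>\<close>, and \<open>X\<^sub>2\<close> central \<open>\<chi>\<^sup>2\<close> with \<open>2 m\<^sub>2\<close> degrees of freedom.\<close>
definition chi2_ratio_CDF :: "nat \<Rightarrow> nat \<Rightarrow> real \<Rightarrow> real \<Rightarrow> ennreal" where
  "chi2_ratio_CDF m1 m2 lam g =
     (\<integral>\<^sup>+ b. ennreal (erlang_density (m2 - 1) (1/2) b * nc_chi2_CDF m1 lam (g * b)) \<partial>lborel)"

lemma ncF_cdf_eq_chi2_ratio_CDF: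
  assumes "m1 \<ge> 2" and "m2 \<ge> 2" and "lam \<ge> 0"
  shows "ncF_cdf x (2 * real m1) (2 * real m2) lam
    = enn2real (chi2_ratio_CDF m1 m2 lam (x * real m1 / real m2))"
proof -
  have "x * (2 * real m1) / (2 * real m2) * b = x * real m1 / real m2 * b" for b
    by simp
  then have "ncF_cdf x (2 * real m1) (2 * real m2) lam
      = (\<integral>b. erlang_density (m2 - 1) (1/2) b * nc_chi2_CDF m1 lam (x * real m1 / real m2 * b) \<partial>lborel)"
    unfolding ncF_cdf_def using assms
    by (simp add: chi2_density_eq_erlang_density integral_nc_chi2_density_atMost)
  also have "\<dots> = enn2real (chi2_ratio_CDF m1 m2 lam (x * real m1 / real m2))"
    unfolding chi2_ratio_CDF_def using assms(3)
    by (intro integral_eq_nn_integral) (auto intro!: mult_nonneg_nonneg nc_chi2_CDF_nonneg)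
  finally show ?thesis .
qed

section \<open>Exponential bounds on the ratio of chi-square variables\<close>

lemma erlang_density_mult_exp:
  assumes "l + s > 0"
  shows "erlang_density k l x * exp (- s * x) = (l / (l + s)) ^ Suc k * erlang_density k (l + s) x"
  unfolding erlang_density_def using assms
  by (simp add: power_divide mult_exp_exp algebra_simps del: power_Suc)

lemma nn_integral_erlang_density_mult_exp:
  assumes "l > 0" and "l + s > 0"
  shows "(\<integral>\<^sup>+ x. ennreal (erlang_density k l x * exp (- s * x)) \<partial>lborel) = ennreal ((l / (l + s)) ^ Suc k)"
proof -
  have "(\<integral>\<^sup>+ x. ennreal (erlang_density k l x * exp (- s * x)) \<partial>lborel)
      = (\<integral>\<^sup>+ x. ennreal ((l / (l + s)) ^ Suc k) * ennreal (erlang_density k (l + s) x) \<partial>lborel)"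
    unfolding erlang_density_mult_exp[OF assms(2)] using assms
    by (intro nn_integral_cong ennreal_mult) simp_all
  also have "\<dots> = ennreal ((l / (l + s)) ^ Suc k) * (\<integral>\<^sup>+ x. ennreal (erlang_density k (l + s) x) \<partial>lborel)"
    by (rule nn_integral_cmult) measurable
  finally show ?thesis
    using assms nn_integral_erlang_ith_moment[of "l + s" k 0] by simp
qed

lemma erlang_CDF_le_exp:
  assumes "l > 0" and "t \<ge> 0"
  shows "erlang_CDF k l y \<le> exp (t * y) * (l / (l + t)) ^ Suc k"
proof -
  have "ennreal (erlang_CDF k l y) = (\<integral>\<^sup>+ x. ennreal (erlang_density k l x) * indicator {..y} x \<partial>lborel)"
    using assms by (simp add: nn_integral_erlang_density)
  also have "\<dots> \<le> (\<integral>\<^sup>+ x. ennreal (exp (t * y)) * ennreal (erlang_density k l x * exp (- t * x)) \<partial>lborel)"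
  proof (intro nn_integral_mono)
    fix x
    have "x \<le> y \<Longrightarrow> 1 \<le> exp (t * y) * exp (- t * x)"
      using assms by (simp add: mult_exp_exp mult_left_mono algebra_simps)
    then have "x \<le> y \<Longrightarrow> erlang_density k l x \<le> exp (t * y) * (erlang_density k l x * exp (- t * x))"
      using assms mult_left_mono[of 1 "exp (t * y) * exp (- t * x)" "erlang_density k l x"]
      by (simp add: mult_ac)
    then show "ennreal (erlang_density k l x) * indicator {..y} x
        \<le> ennreal (exp (t * y)) * ennreal (erlang_density k l x * exp (- t * x))"
      using assms by (auto simp: ennreal_mult[symmetric] ennreal_leI split: split_indicator)
  qed
  also have "\<dots> = ennreal (exp (t * y)) * (\<integral>\<^sup>+ x. ennreal (erlang_density k l x * exp (- t * x)) \<partial>lborel)"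
    by (rule nn_integral_cmult) measurable
  also have "\<dots> = ennreal (exp (t * y) * (l / (l + t)) ^ Suc k)"
    using assms by (subst nn_integral_erlang_density_mult_exp) (auto simp: ennreal_mult[symmetric])
  finally show ?thesis
    using assms by (simp add: ennreal_le_iff)
qed

lemma nc_chi2_CDF_le_exp:
  assumes "t \<ge> 0" and "lam \<ge> 0" and "m \<ge> 1"
  shows "nc_chi2_CDF m lam y \<le> exp (t * y) * exp (- lam * t / (1 + 2 * t)) / (1 + 2 * t) ^ m"
proof -
  define u where "u = 1 / (1 + 2 * t)"
  have "(\<lambda>j. exp (t * y) * u ^ m * (poisson_weight (lam / 2) j * u ^ j))
      sums (exp (t * y) * u ^ m * exp (lam / 2 * (u - 1)))"
    by (intro sums_mult poisson_weight_power_sums)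
  moreover have "exp (t * y) * u ^ m * (poisson_weight (lam / 2) j * u ^ j)
      = poisson_weight (lam / 2) j * (exp (t * y) * ((1/2) / (1/2 + t)) ^ Suc (m + j - 1))" for j
    using \<open>m \<ge> 1\<close> unfolding u_def by (simp add: power_add field_simps)
  ultimately have sums: "(\<lambda>j. poisson_weight (lam / 2) j * (exp (t * y) * ((1/2) / (1/2 + t)) ^ Suc (m + j - 1)))
      sums (exp (t * y) * u ^ m * exp (lam / 2 * (u - 1)))"
    by simp
  have "nc_chi2_CDF m lam y \<le> exp (t * y) * u ^ m * exp (lam / 2 * (u - 1))"
    unfolding nc_chi2_CDF_def sums_unique[OF sums]
    using assms summable_nc_chi2_CDF sums_summable[OF sums]
    by (intro suminf_le mult_left_mono erlang_CDF_le_exp) (auto simp: poisson_weight_nonneg)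
  also have "\<dots> = exp (t * y) * exp (- lam * t / (1 + 2 * t)) / (1 + 2 * t) ^ m"
    using assms unfolding u_def by (simp add: power_one_over field_simps)
  finally show ?thesis .
qed

lemma chi2_ratio_CDF_le:
  assumes "t \<ge> 0" and "lam \<ge> 0" and "m1 \<ge> 1" and "m2 \<ge> 1" and "2 * t * g < 1"
  shows "chi2_ratio_CDF m1 m2 lam g
    \<le> ennreal (exp (- lam * t / (1 + 2 * t)) / ((1 + 2 * t) ^ m1 * (1 - 2 * t * g) ^ m2))"
proof -
  define C where "C = exp (- lam * t / (1 + 2 * t)) / (1 + 2 * t) ^ m1"
  have "C \<ge> 0"
    unfolding C_def using assms by simp
  have "chi2_ratio_CDF m1 m2 lam g
      \<le> (\<integral>\<^sup>+ b. ennreal C * ennreal (erlang_density (m2 - 1) (1/2) b * exp (- (- t * g) * b)) \<partial>lborel)"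
    unfolding chi2_ratio_CDF_def
  proof (intro nn_integral_mono)
    fix b
    have "nc_chi2_CDF m1 lam (g * b) \<le> C * exp (- (- t * g) * b)"
      using nc_chi2_CDF_le_exp[OF assms(1-3), of "g * b"] unfolding C_def by (simp add: mult_ac)
    moreover have "erlang_density (m2 - 1) (1/2) b \<ge> 0"
      by simp
    ultimately have "erlang_density (m2 - 1) (1/2) b * nc_chi2_CDF m1 lam (g * b)
        \<le> C * (erlang_density (m2 - 1) (1/2) b * exp (- (- t * g) * b))"
      by (metis mult_left_mono mult.left_commute)
    then show "ennreal (erlang_density (m2 - 1) (1/2) b * nc_chi2_CDF m1 lam (g * b))
        \<le> ennreal C * ennreal (erlang_density (m2 - 1) (1/2) b * exp (- (- t * g) * b))"
      using \<open>C \<ge> 0\<close> by (simp add: ennreal_mult[symmetric] ennreal_leI)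
  qed
  also have "\<dots> = ennreal C * ennreal (((1/2) / (1/2 + - t * g)) ^ Suc (m2 - 1))"
    using assms by (subst nn_integral_cmult, measurable, subst nn_integral_erlang_density_mult_exp) auto
  also have "\<dots> = ennreal (exp (- lam * t / (1 + 2 * t)) / ((1 + 2 * t) ^ m1 * (1 - 2 * t * g) ^ m2))"
    using assms \<open>C \<ge> 0\<close> unfolding C_def
    by (simp add: ennreal_mult[symmetric] power_one_over field_simps)
  finally show ?thesis .
qed

lemma erlang_CDF_mono:
  assumes "l > 0" and "y1 \<le> y2"
  shows "erlang_CDF k l y1 \<le> erlang_CDF k l y2"
proof -
  have "ennreal (erlang_CDF k l y1) \<le> ennreal (erlang_CDF k l y2)"
    unfolding nn_integral_erlang_density[OF assms(1), symmetric]
    using assms by (intro nn_integral_mono) (auto split: split_indicator)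
  then show ?thesis
    using assms by (simp add: ennreal_le_iff)
qed

lemma poisson_weight_le_erlang_CDF:
  assumes "l \<ge> 0" and "y \<ge> 0"
  shows "poisson_weight (l * y) (Suc k) \<le> erlang_CDF k l y"
  using sum_poisson_weight_le_1[of "{..Suc k}" "l * y"] assms
  by (simp add: erlang_CDF_eq_poisson_weight)

lemma poisson_weight_le_erlang_tail:
  assumes "l > 0" and "B \<ge> 0"
  shows "ennreal (poisson_weight (l * B) k)
    \<le> (\<integral>\<^sup>+ b. ennreal (erlang_density k l b) * indicator {B<..} b \<partial>lborel)"
proof -
  define tail where "tail = (\<integral>\<^sup>+ b. ennreal (erlang_density k l b) * indicator {B<..} b \<partial>lborel)"
  have "ennreal (erlang_CDF k l B) + tail
      = (\<integral>\<^sup>+ b. ennreal (erlang_density k l b) * indicator {..B} b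
          + ennreal (erlang_density k l b) * indicator {B<..} b \<partial>lborel)"
    unfolding tail_def nn_integral_erlang_density[OF assms(1), symmetric]
    by (rule nn_integral_add[symmetric]) measurable
  also have "\<dots> = (\<integral>\<^sup>+ b. ennreal (erlang_density k l b * b ^ 0) \<partial>lborel)"
    by (intro nn_integral_cong) (auto split: split_indicator)
  also have "\<dots> = 1"
    using assms by (subst nn_integral_erlang_ith_moment) auto
  finally have total: "ennreal (erlang_CDF k l B) + tail = 1" .
  have "poisson_weight (l * B) k \<le> (\<Sum>n\<le>k. poisson_weight (l * B) n)"
    using assms by (intro member_le_sum) (auto intro: poisson_weight_nonneg)
  then have "erlang_CDF k l B + poisson_weight (l * B) k \<le> 1"
    using assms by (simp add: erlang_CDF_eq_poisson_weight)
  then have "ennreal (erlang_CDF k l B) + ennreal (poisson_weight (l * B) k) \<le> ennreal (erlang_CDF k l B) + tail"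
    using assms unfolding total
    by (simp add: poisson_weight_nonneg ennreal_plus[symmetric] del: ennreal_plus)
  then show ?thesis
    unfolding tail_def by (simp add: ennreal_add_left_cancel_le)
qed

lemma nc_chi2_CDF_ge:
  assumes "lam \<ge> 0" and "m \<ge> 1" and "0 \<le> A" and "A \<le> y"
  shows "poisson_weight (lam / 2) j * poisson_weight (A / 2) (m + j) \<le> nc_chi2_CDF m lam y"
proof -
  have "poisson_weight (A / 2) (m + j) \<le> erlang_CDF (m + j - 1) (1/2) A"
    using poisson_weight_le_erlang_CDF[of "1/2" A "m + j - 1"] assms by simp
  also have "\<dots> \<le> erlang_CDF (m + j - 1) (1/2) y"
    using assms by (intro erlang_CDF_mono) auto
  finally have "poisson_weight (lam / 2) j * poisson_weight (A / 2) (m + j)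
      \<le> poisson_weight (lam / 2) j * erlang_CDF (m + j - 1) (1/2) y"
    using assms by (intro mult_left_mono poisson_weight_nonneg) auto
  also have "\<dots> \<le> nc_chi2_CDF m lam y"
    unfolding nc_chi2_CDF_def
    using sum_le_suminf[OF summable_nc_chi2_CDF, of lam "{j}"] nc_chi2_CDF_term_nonneg assms
    by simp
  finally show ?thesis .
qed

text \<open>Keep only the \<open>j\<close>-th Poisson component of \<open>X\<^sub>1\<close> and the events \<open>X\<^sub>1 \<le> A\<close>, \<open>X\<^sub>2 > B\<close>,
  which force \<open>X\<^sub>1 \<le> g X\<^sub>2\<close> since \<open>A \<le> g B\<close>.\<close>
lemma chi2_ratio_CDF_ge:
  assumes "lam \<ge> 0" and "m1 \<ge> 1" and "g > 0" and "0 \<le> A" and "0 \<le> B" and "A \<le> g * B"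
  shows "ennreal (poisson_weight (lam / 2) j * poisson_weight (A / 2) (m1 + j) * poisson_weight (B / 2) (m2 - 1))
    \<le> chi2_ratio_CDF m1 m2 lam g"
proof -
  define c where "c = poisson_weight (lam / 2) j * poisson_weight (A / 2) (m1 + j)"
  have "c \<ge> 0"
    unfolding c_def using assms by (simp add: poisson_weight_nonneg)
  have "ennreal (c * poisson_weight (B / 2) (m2 - 1)) = ennreal c * ennreal (poisson_weight (1/2 * B) (m2 - 1))"
    using \<open>c \<ge> 0\<close> assms by (simp add: ennreal_mult poisson_weight_nonneg)
  also have "\<dots> \<le> ennreal c * (\<integral>\<^sup>+ b. ennreal (erlang_density (m2 - 1) (1/2) b) * indicator {B<..} b \<partial>lborel)"
    using assms by (intro mult_left_mono poisson_weight_le_erlang_tail) auto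
  also have "\<dots> = (\<integral>\<^sup>+ b. ennreal c * (ennreal (erlang_density (m2 - 1) (1/2) b) * indicator {B<..} b) \<partial>lborel)"
    by (rule nn_integral_cmult[symmetric]) measurable
  also have "\<dots> \<le> chi2_ratio_CDF m1 m2 lam g"
    unfolding chi2_ratio_CDF_def
  proof (intro nn_integral_mono)
    fix b
    show "ennreal c * (ennreal (erlang_density (m2 - 1) (1/2) b) * indicator {B<..} b)
        \<le> ennreal (erlang_density (m2 - 1) (1/2) b * nc_chi2_CDF m1 lam (g * b))"
    proof (cases "b > B")
      case True
      then have "A \<le> g * b"
        using assms by (smt (verit) mult_left_mono)
      then have "c \<le> nc_chi2_CDF m1 lam (g * b)"
        unfolding c_def using assms by (intro nc_chi2_CDF_ge) auto
      then have "c * erlang_density (m2 - 1) (1/2) b \<le> erlang_density (m2 - 1) (1/2) b * nc_chi2_CDF m1 lam (g * b)"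
        by (simp add: mult_right_mono mult.commute)
      with True \<open>c \<ge> 0\<close> show ?thesis
        by (simp add: ennreal_mult[symmetric] ennreal_leI)
    qed simp
  qed
  finally show ?thesis
    unfolding c_def .
qed

section \<open>The exponential rate of the miss probability\<close>

lemma p_miss_eq_chi2_ratio_CDF:
  assumes "NR \<ge> 1" and "Ns \<ge> 2" and "L \<ge> 2" and "eta \<ge> 0"
  shows "p_miss NR Ns L eta gamma
    = enn2real (chi2_ratio_CDF (NR * L) (NR * L * (Ns - 1)) (real L * eta) gamma)"
proof -
  have m1: "NR * L \<ge> 2"
    using assms mult_le_mono[of 1 NR 2 L] by simp
  moreover have "NR * L * 1 \<le> NR * L * (Ns - 1)"
    using assms by (intro mult_le_mono2) simp
  ultimately have m2: "NR * L * (Ns - 1) \<ge> 2"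
    by linarith
  have "p_miss NR Ns L eta gamma = ncF_cdf ((real Ns - 1) * gamma)
      (2 * real (NR * L)) (2 * real (NR * L * (Ns - 1))) (real L * eta)"
    unfolding p_miss_def using assms by (simp add: of_nat_diff mult.assoc)
  also have "\<dots> = enn2real (chi2_ratio_CDF (NR * L) (NR * L * (Ns - 1)) (real L * eta)
      ((real Ns - 1) * gamma * real (NR * L) / real (NR * L * (Ns - 1))))"
    using assms m1 m2 by (intro ncF_cdf_eq_chi2_ratio_CDF) auto
  also have "(real Ns - 1) * gamma * real (NR * L) / real (NR * L * (Ns - 1)) = gamma"
    using assms by (simp add: of_nat_diff)
  finally show ?thesis .
qed

definition chernoff_exponent :: "nat \<Rightarrow> nat \<Rightarrow> real \<Rightarrow> real \<Rightarrow> real \<Rightarrow> real" where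
  "chernoff_exponent NR Ns eta gamma t = real NR * ln (1 + 2 * t) + eta * t / (1 + 2 * t)
      + real NR * (real Ns - 1) * ln (1 - 2 * t * gamma)"

lemma p_miss_le_exp_chernoff_exponent:
  assumes "NR \<ge> 1" and "Ns \<ge> 2" and "L \<ge> 2" and "eta \<ge> 0"
    and "t \<ge> 0" and "2 * t * gamma < 1"
  shows "p_miss NR Ns L eta gamma \<le> exp (- real L * chernoff_exponent NR Ns eta gamma t)"
proof -
  define U where "U = exp (- (real L * eta) * t / (1 + 2 * t))
    / ((1 + 2 * t) ^ (NR * L) * (1 - 2 * t * gamma) ^ (NR * L * (Ns - 1)))"
  have "U > 0"
    unfolding U_def using assms by simp
  have "ln U = - real L * chernoff_exponent NR Ns eta gamma t"
    unfolding U_def chernoff_exponent_def using assms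
    by (simp add: ln_div ln_mult ln_realpow of_nat_diff algebra_simps)
  then have "U = exp (- real L * chernoff_exponent NR Ns eta gamma t)"
    using \<open>U > 0\<close> by (metis exp_ln)
  moreover have "p_miss NR Ns L eta gamma \<le> U"
    unfolding p_miss_eq_chi2_ratio_CDF[OF assms(1-4)] U_def using assms
    by (intro enn2real_leI chi2_ratio_CDF_le) auto
  ultimately show ?thesis
    by simp
qed

lemma p_miss_ge_poisson_weights:
  assumes "NR \<ge> 1" and "Ns \<ge> 2" and "L \<ge> 2" and "eta \<ge> 0" and "gamma > 0"
    and "0 \<le> A" and "0 \<le> B" and "A \<le> gamma * B"
  shows "poisson_weight (real L * eta / 2) j * poisson_weight (A / 2) (NR * L + j)
      * poisson_weight (B / 2) (NR * L * (Ns - 1) - 1) \<le> p_miss NR Ns L eta gamma"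
proof -
  have "chi2_ratio_CDF (NR * L) (NR * L * (Ns - 1)) (real L * eta) gamma \<le> ennreal 1"
    using chi2_ratio_CDF_le[where t = 0] assms by simp
  then have finite: "chi2_ratio_CDF (NR * L) (NR * L * (Ns - 1)) (real L * eta) gamma < top"
    using order.strict_trans1 by fastforce
  have "ennreal (poisson_weight (real L * eta / 2) j * poisson_weight (A / 2) (NR * L + j)
      * poisson_weight (B / 2) (NR * L * (Ns - 1) - 1))
      \<le> chi2_ratio_CDF (NR * L) (NR * L * (Ns - 1)) (real L * eta) gamma"
    using assms by (intro chi2_ratio_CDF_ge) auto
  from enn2real_mono[OF this finite] show ?thesis
    unfolding p_miss_eq_chi2_ratio_CDF[OF assms(1-4)] using assms
    by (simp add: poisson_weight_nonneg)
qed

lemma p_miss_pos: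
  assumes "NR \<ge> 1" and "Ns \<ge> 2" and "L \<ge> 2" and "eta > 0" and "gamma > 0"
  shows "p_miss NR Ns L eta gamma > 0"
proof -
  have "0 < poisson_weight (real L * eta / 2) 0 * poisson_weight (gamma / 2) (NR * L + 0)
      * poisson_weight (1 / 2) (NR * L * (Ns - 1) - 1)"
    using assms by (simp add: poisson_weight_pos)
  also have "\<dots> \<le> p_miss NR Ns L eta gamma"
    using assms by (intro p_miss_ge_poisson_weights) auto
  finally show ?thesis .
qed

lemma miss_rate_ge_chernoff_exponent:
  assumes "NR \<ge> 1" and "Ns \<ge> 2" and "L \<ge> 2" and "eta > 0" and "gamma > 0"
    and "t \<ge> 0" and "2 * t * gamma < 1"
  shows "chernoff_exponent NR Ns eta gamma t \<le> - (1 / real L) * ln (p_miss NR Ns L eta gamma)"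
proof -
  have "ln (p_miss NR Ns L eta gamma) \<le> - real L * chernoff_exponent NR Ns eta gamma t"
    using p_miss_le_exp_chernoff_exponent[OF assms(1-3) less_imp_le[OF assms(4)] assms(6,7)] p_miss_pos[OF assms(1-5)]
    using ln_mono by fastforce
  with \<open>L \<ge> 2\<close> show ?thesis
    by (simp add: field_simps)
qed

lemma miss_rate_le_poisson_exponents:
  assumes "NR \<ge> 1" and "Ns \<ge> 2" and "L \<ge> 2" and "eta > 0" and "gamma > 0"
    and "a > 0" and "b > 0" and "a \<le> gamma * b"
  shows "- (1 / real L) * ln (p_miss NR Ns L eta gamma)
    \<le> (poisson_exponent (eta / 2 * real L) j + poisson_exponent (a / 2 * real L) (NR * L + j)
        + poisson_exponent (b / 2 * real L) (NR * L * (Ns - 1) - 1)) / real L"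
proof -
  define w1 w2 w3 where "w1 = poisson_weight (eta / 2 * real L) j"
    and "w2 = poisson_weight (a / 2 * real L) (NR * L + j)"
    and "w3 = poisson_weight (b / 2 * real L) (NR * L * (Ns - 1) - 1)"
  have pos: "w1 > 0" "w2 > 0" "w3 > 0"
    unfolding w1_def w2_def w3_def using assms by (simp_all add: poisson_weight_pos)
  have "w1 * w2 * w3 \<le> p_miss NR Ns L eta gamma"
    using p_miss_ge_poisson_weights[of NR Ns L eta gamma "a * real L" "b * real L" j] assms
    unfolding w1_def w2_def w3_def by (simp add: mult_right_mono mult_ac)
  then have "ln (w1 * w2 * w3) \<le> ln (p_miss NR Ns L eta gamma)"
    using pos by (intro ln_mono) auto
  then have "ln w1 + ln w2 + ln w3 \<le> ln (p_miss NR Ns L eta gamma)"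
    using pos by (simp add: ln_mult)
  moreover have "- poisson_exponent (eta / 2 * real L) j \<le> ln w1"
    and "- poisson_exponent (a / 2 * real L) (NR * L + j) \<le> ln w2"
    and "- poisson_exponent (b / 2 * real L) (NR * L * (Ns - 1) - 1) \<le> ln w3"
    unfolding w1_def w2_def w3_def using assms by (simp_all add: ln_poisson_weight_ge)
  ultimately show ?thesis
    using \<open>L \<ge> 2\<close> by (simp add: field_simps)
qed

text \<open>The Chernoff bound gives the lower limit; the upper limit comes from the Poisson component
  \<open>j \<approx> cL\<close> of \<open>X\<^sub>1\<close> together with the events \<open>X\<^sub>1 \<le> aL\<close> and \<open>X\<^sub>2 > bL\<close>.\<close>
lemma tendsto_miss_rate:
  assumes "NR \<ge> 1" and "Ns \<ge> 2" and "eta > 0" and "gamma > 0"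
    and "t \<ge> 0" and "2 * t * gamma < 1" and "a > 0" and "b > 0" and "c > 0" and "a \<le> gamma * b"
    and "chernoff_exponent NR Ns eta gamma t = poisson_rate (eta / 2) c
      + poisson_rate (a / 2) (real NR + c) + poisson_rate (b / 2) (real NR * (real Ns - 1))"
  shows "(\<lambda>L. - (1 / real L) * ln (p_miss NR Ns L eta gamma)) \<longlonglongrightarrow> chernoff_exponent NR Ns eta gamma t"
proof (rule tendsto_sandwich)
  define j where "j L = nat \<lfloor>c * real L\<rfloor>" for L
  show "\<forall>\<^sub>F L in sequentially. chernoff_exponent NR Ns eta gamma t \<le> - (1 / real L) * ln (p_miss NR Ns L eta gamma)"
    using assms by (intro eventually_sequentiallyI[of 2] miss_rate_ge_chernoff_exponent) auto
  show "\<forall>\<^sub>F L in sequentially. - (1 / real L) * ln (p_miss NR Ns L eta gamma)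
      \<le> poisson_exponent (eta / 2 * real L) (j L) / real L
        + poisson_exponent (a / 2 * real L) (NR * L + j L) / real L
        + poisson_exponent (b / 2 * real L) (NR * L * (Ns - 1) - 1) / real L"
    using assms miss_rate_le_poisson_exponents[of NR Ns _ eta gamma a b]
    by (intro eventually_sequentiallyI[of 2]) (simp add: add_divide_distrib)
  have j: "\<bar>real (j L) - c * real L\<bar> \<le> 1" for L
  proof -
    have "real (j L) = of_int \<lfloor>c * real L\<rfloor>"
      unfolding j_def using \<open>c > 0\<close> by simp
    then show ?thesis
      using of_int_floor_le[of "c * real L"] real_of_int_floor_gt_diff_one[of "c * real L"]
      by linarith
  qed
  have "\<bar>real (NR * L + j L) - (real NR + c) * real L\<bar> \<le> 1" for L
    using j[of L] by (simp add: algebra_simps)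
  moreover have "\<bar>real (NR * L * (Ns - 1) - 1) - real NR * (real Ns - 1) * real L\<bar> \<le> 1" for L
  proof -
    have k: "real (NR * L * (Ns - 1)) = real NR * (real Ns - 1) * real L"
      using \<open>Ns \<ge> 2\<close> by (simp add: of_nat_diff)
    have "\<bar>real (k - 1) - real k\<bar> \<le> 1" for k :: nat
      by (cases k) auto
    from this[of "NR * L * (Ns - 1)"] show ?thesis
      unfolding k .
  qed
  ultimately have "(\<lambda>L. poisson_exponent (eta / 2 * real L) (j L) / real L
        + poisson_exponent (a / 2 * real L) (NR * L + j L) / real L
        + poisson_exponent (b / 2 * real L) (NR * L * (Ns - 1) - 1) / real L)
      \<longlonglongrightarrow> poisson_rate (eta / 2) c + poisson_rate (a / 2) (real NR + c)
        + poisson_rate (b / 2) (real NR * (real Ns - 1))"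
    using assms j by (intro tendsto_add tendsto_poisson_exponent tendsto_ratio_of_bounded_diff) auto
  then show "(\<lambda>L. poisson_exponent (eta / 2 * real L) (j L) / real L
        + poisson_exponent (a / 2 * real L) (NR * L + j L) / real L
        + poisson_exponent (b / 2 * real L) (NR * L * (Ns - 1) - 1) / real L)
      \<longlonglongrightarrow> chernoff_exponent NR Ns eta gamma t"
    using assms(11) by simp
qed (rule tendsto_const)

section \<open>The optimal tilt\<close>

lemma ex1_pos_root_quadratic:
  fixes a C :: real
  assumes "a > 0" and "C > 0"
  shows "\<exists>!x. x > 0 \<and> a * x\<^sup>2 - x - C = 0"
proof (rule ex1I)
  define x0 where "x0 = (1 + sqrt (1 + 4 * a * C)) / (2 * a)"
  have "sqrt (1 + 4 * a * C) ^ 2 = 1 + 4 * a * C"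
    using assms by simp
  then show "x0 > 0 \<and> a * x0\<^sup>2 - x0 - C = 0"
    unfolding x0_def using assms
    by (auto simp: field_simps power2_eq_square intro!: add_pos_nonneg)
  fix y
  assume y: "y > 0 \<and> a * y\<^sup>2 - y - C = 0"
  show "y = x0"
  proof (rule ccontr)
    assume "y \<noteq> x0"
    moreover have "(y - x0) * (a * (y + x0) - 1) = (a * y\<^sup>2 - y - C) - (a * x0\<^sup>2 - x0 - C)"
      by (simp add: algebra_simps power2_eq_square)
    ultimately have "a * (y + x0) = 1"
      using y \<open>x0 > 0 \<and> a * x0\<^sup>2 - x0 - C = 0\<close> by simp
    text \<open>The product of the two roots is \<open>-C/a < 0\<close>.\<close>
    then have "a * y - 1 = - (a * x0)"
      by (simp add: algebra_simps)
    moreover have "C = y * (a * y - 1)"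
      using y by (simp add: algebra_simps power2_eq_square)
    ultimately have "C = - (a * x0 * y)"
      by simp
    with assms y \<open>x0 > 0 \<and> a * x0\<^sup>2 - x0 - C = 0\<close> show False
      by (smt (verit) mult_pos_pos)
  qed
qed

lemma ln_le_tangent:
  fixes x y :: real
  shows "x > 0 \<Longrightarrow> y > 0 \<Longrightarrow> ln x \<le> ln y + (x - y) / y"
  using ln_le_minus_one[of "x / y"] by (simp add: ln_div diff_divide_distrib)

lemma div_one_plus_two_le_tangent:
  fixes s t :: real
  assumes "1 + 2 * s > 0" and "1 + 2 * t > 0"
  shows "s / (1 + 2 * s) \<le> t / (1 + 2 * t) + (s - t) / (1 + 2 * t)\<^sup>2"
proof -
  have "0 \<le> (s - t)\<^sup>2"
    by simp
  then have "s * (t * 4) \<le> s * (s * 2) + t * (t * 2)"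
    by (simp add: power2_eq_square algebra_simps)
  with assms show ?thesis
    by (simp add: divide_simps power2_eq_square) (simp add: algebra_simps)
qed

lemma chernoff_exponent_le_tangent:
  assumes "1 + 2 * s > 0" and "2 * s * gamma < 1" and "1 + 2 * t > 0" and "2 * t * gamma < 1"
    and "eta \<ge> 0" and "Ns \<ge> 1"
  shows "chernoff_exponent NR Ns eta gamma s \<le> chernoff_exponent NR Ns eta gamma t
    + (s - t) * (2 * real NR / (1 + 2 * t) + eta / (1 + 2 * t)\<^sup>2
                 - 2 * gamma * (real NR * (real Ns - 1)) / (1 - 2 * t * gamma))"
proof -
  have "real NR * ln (1 + 2 * s) \<le> real NR * (ln (1 + 2 * t) + (1 + 2 * s - (1 + 2 * t)) / (1 + 2 * t))"
    using assms ln_le_tangent[of "1 + 2 * s" "1 + 2 * t"] by (intro mult_left_mono) auto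
  also have "\<dots> = real NR * ln (1 + 2 * t) + (s - t) * (2 * real NR / (1 + 2 * t))"
    by (simp add: field_simps)
  finally have log_term: "real NR * ln (1 + 2 * s) \<le> real NR * ln (1 + 2 * t) + (s - t) * (2 * real NR / (1 + 2 * t))" .
  have "eta * (s / (1 + 2 * s)) \<le> eta * (t / (1 + 2 * t) + (s - t) / (1 + 2 * t)\<^sup>2)"
    using assms div_one_plus_two_le_tangent[of s t] by (intro mult_left_mono) auto
  then have frac_term: "eta * s / (1 + 2 * s) \<le> eta * t / (1 + 2 * t) + (s - t) * (eta / (1 + 2 * t)\<^sup>2)"
    by (simp add: algebra_simps)
  have "real NR * (real Ns - 1) * ln (1 - 2 * s * gamma)
      \<le> real NR * (real Ns - 1) * (ln (1 - 2 * t * gamma) + (1 - 2 * s * gamma - (1 - 2 * t * gamma)) / (1 - 2 * t * gamma))"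
    using assms ln_le_tangent[of "1 - 2 * s * gamma" "1 - 2 * t * gamma"] by (intro mult_left_mono) auto
  also have "\<dots> = real NR * (real Ns - 1) * ln (1 - 2 * t * gamma)
      - (s - t) * (2 * gamma * (real NR * (real Ns - 1)) / (1 - 2 * t * gamma))"
    using assms by (simp add: field_simps)
  finally have noise_term: "real NR * (real Ns - 1) * ln (1 - 2 * s * gamma) \<le> real NR * (real Ns - 1) * ln (1 - 2 * t * gamma)
      - (s - t) * (2 * gamma * (real NR * (real Ns - 1)) / (1 - 2 * t * gamma))" .
  from log_term frac_term noise_term show ?thesis
    unfolding chernoff_exponent_def by (simp add: right_diff_distrib distrib_left)
qed

text \<open>\<open>q\<^sup>* = 1/(1 + 2 t\<^sup>*)\<close>, where \<open>t\<^sup>*\<close> maximises the Chernoff exponent.\<close>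
definition qstar :: "nat \<Rightarrow> nat \<Rightarrow> real \<Rightarrow> real \<Rightarrow> real" where
  "qstar NR Ns eta gamma = (xstar NR Ns eta gamma - real NR) / eta"

definition tstar :: "nat \<Rightarrow> nat \<Rightarrow> real \<Rightarrow> real \<Rightarrow> real" where
  "tstar NR Ns eta gamma = (1 / qstar NR Ns eta gamma - 1) / 2"

context
  fixes NR Ns :: nat and eta gamma :: real
  assumes NR: "NR \<ge> 1" and Ns: "Ns \<ge> 2" and eta: "eta > 0" and gamma: "gamma > 0"
begin

lemma xstar_pos_root:
  "xstar NR Ns eta gamma > 0 \<and> (gamma + 1) / (eta * gamma) * ((xstar NR Ns eta gamma)\<^sup>2 - (real NR)\<^sup>2)
     - xstar NR Ns eta gamma - real NR - 2 * real NR * (real Ns - 1) = 0"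
proof -
  define a where "a = (gamma + 1) / (eta * gamma)"
  define C where "C = a * (real NR)\<^sup>2 + real NR + 2 * real NR * (real Ns - 1)"
  have "a > 0" and "C > 0"
    unfolding a_def C_def using NR Ns eta gamma by (auto intro!: add_nonneg_pos add_pos_nonneg)
  have "(gamma + 1) / (eta * gamma) * (x\<^sup>2 - (real NR)\<^sup>2) - x - real NR - 2 * real NR * (real Ns - 1)
      = a * x\<^sup>2 - x - C" for x
    unfolding a_def C_def by (simp add: algebra_simps)
  then show ?thesis
    unfolding xstar_def by (simp only:) (rule theI'[OF ex1_pos_root_quadratic[OF \<open>a > 0\<close> \<open>C > 0\<close>]])
qed

lemma xstar_equation:
  "(gamma + 1) * ((xstar NR Ns eta gamma)\<^sup>2 - (real NR)\<^sup>2)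
     = eta * gamma * (xstar NR Ns eta gamma + real NR + 2 * real NR * (real Ns - 1))"
  using xstar_pos_root eta gamma by (simp add: field_simps)

lemma xstar_gt: "xstar NR Ns eta gamma > real NR"
proof (rule ccontr)
  let ?x = "xstar NR Ns eta gamma"
  assume "\<not> ?x > real NR"
  then have "?x\<^sup>2 \<le> (real NR)\<^sup>2"
    using xstar_pos_root by (intro power_mono) auto
  then have "(gamma + 1) * (?x\<^sup>2 - (real NR)\<^sup>2) \<le> 0"
    using gamma by (simp add: mult_nonneg_nonpos)
  moreover have "eta * gamma * (?x + real NR + 2 * real NR * (real Ns - 1)) > 0"
    using xstar_pos_root eta gamma Ns by (intro mult_pos_pos add_pos_nonneg) auto
  ultimately show False
    using xstar_equation by simp
qed

lemma qstar_pos: "qstar NR Ns eta gamma > 0"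
  unfolding qstar_def using xstar_gt eta by simp

lemma qstar_equation:
  "(2 * real NR + eta * qstar NR Ns eta gamma) * ((gamma + 1) * qstar NR Ns eta gamma - gamma)
     = 2 * gamma * (real NR * (real Ns - 1))"
proof -
  let ?q = "qstar NR Ns eta gamma"
  have x: "xstar NR Ns eta gamma = real NR + eta * ?q"
    unfolding qstar_def using eta by simp
  have "eta * ((gamma + 1) * ?q * (2 * real NR + eta * ?q))
      = eta * (gamma * (2 * real NR + eta * ?q + 2 * (real NR * (real Ns - 1))))"
    using xstar_equation unfolding x by (simp add: power2_eq_square algebra_simps)
  then have "(gamma + 1) * ?q * (2 * real NR + eta * ?q)
      = gamma * (2 * real NR + eta * ?q + 2 * (real NR * (real Ns - 1)))"
    using eta by simp
  then show ?thesis
    by (simp add: algebra_simps)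
qed

lemma vstar_eq: "vstar NR Ns eta gamma = qstar NR Ns eta gamma * (2 * real NR + eta * qstar NR Ns eta gamma) / gamma"
  unfolding vstar_def qstar_def using eta gamma by (simp add: power2_eq_square field_simps)

lemma vstar_pos: "vstar NR Ns eta gamma > 0"
  unfolding vstar_eq using qstar_pos eta gamma by (simp add: add_nonneg_pos)

lemma qstar_lt_1:
  assumes "gamma < (2 * real NR + eta) / (2 * real NR * (real Ns - 1))"
  shows "qstar NR Ns eta gamma < 1"
proof (rule ccontr)
  let ?q = "qstar NR Ns eta gamma"
  assume "\<not> ?q < 1"
  then have "(gamma + 1) * 1 \<le> (gamma + 1) * ?q"
    using gamma by (intro mult_left_mono) auto
  with \<open>\<not> ?q < 1\<close> have "1 \<le> (gamma + 1) * ?q - gamma"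
    by simp
  with \<open>\<not> ?q < 1\<close> have "(2 * real NR + eta) * 1 \<le> (2 * real NR + eta * ?q) * ((gamma + 1) * ?q - gamma)"
    using eta gamma by (intro mult_mono) auto
  also have "\<dots> = 2 * gamma * (real NR * (real Ns - 1))"
    by (rule qstar_equation)
  finally show False
    using assms NR Ns by (simp add: pos_less_divide_eq mult_ac)
qed

lemma one_plus_two_tstar: "1 + 2 * tstar NR Ns eta gamma = 1 / qstar NR Ns eta gamma"
  unfolding tstar_def by (simp add: diff_divide_distrib)

lemma one_minus_two_tstar_gamma:
  "1 - 2 * tstar NR Ns eta gamma * gamma = 2 * (real NR * (real Ns - 1)) / vstar NR Ns eta gamma"
proof -
  let ?q = "qstar NR Ns eta gamma"
  have "1 - 2 * tstar NR Ns eta gamma * gamma = ((gamma + 1) * ?q - gamma) / ?q"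
    unfolding tstar_def using qstar_pos by (simp add: field_simps)
  also have "\<dots> = (2 * real NR + eta * ?q) * ((gamma + 1) * ?q - gamma) / ((2 * real NR + eta * ?q) * ?q)"
    using qstar_pos eta add_nonneg_pos[of "2 * real NR" "eta * ?q"] by simp
  also have "\<dots> = 2 * (real NR * (real Ns - 1)) / vstar NR Ns eta gamma"
    unfolding qstar_equation vstar_eq using gamma by (simp add: field_simps)
  finally show ?thesis .
qed

lemma Istar_eq_qstar:
  "Istar NR Ns eta gamma = eta / 2 * (1 - qstar NR Ns eta gamma)
     + real NR * (real Ns - 1) * ln (2 * real NR * (real Ns - 1) / vstar NR Ns eta gamma)
     - real NR * ln (qstar NR Ns eta gamma)"
proof -
  let ?q = "qstar NR Ns eta gamma" and ?v = "vstar NR Ns eta gamma" and ?x = "xstar NR Ns eta gamma"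
  have "gamma * eta * ?v = ?x\<^sup>2 - (real NR)\<^sup>2"
    unfolding vstar_def using eta gamma by simp
  then have "sqrt ((real NR)\<^sup>2 + gamma * eta * ?v) = real NR + eta * ?q"
    using xstar_gt eta unfolding qstar_def by simp
  moreover have "gamma * ?v = ?q * (2 * real NR + eta * ?q)"
    unfolding vstar_eq using gamma by simp
  moreover have "2 * real NR + eta * ?q > 0"
    using qstar_pos eta add_nonneg_pos[of "2 * real NR" "eta * ?q"] by simp
  ultimately have "gamma * ?v / (real NR + sqrt ((real NR)\<^sup>2 + gamma * eta * ?v)) = ?q"
    by simp
  then show ?thesis
    unfolding Istar_def Let_def by (simp add: mult.assoc)
qed

lemma Istar_eq_chernoff_exponent:
  "Istar NR Ns eta gamma = chernoff_exponent NR Ns eta gamma (tstar NR Ns eta gamma)"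
proof -
  let ?q = "qstar NR Ns eta gamma" and ?t = "tstar NR Ns eta gamma"
  have "eta * ?t / (1 + 2 * ?t) = eta / 2 * (1 - ?q)"
    unfolding one_plus_two_tstar unfolding tstar_def using qstar_pos by (simp add: field_simps)
  moreover have "ln (1 + 2 * ?t) = - ln ?q"
    unfolding one_plus_two_tstar using qstar_pos by (simp add: ln_div)
  ultimately show ?thesis
    unfolding Istar_eq_qstar chernoff_exponent_def one_minus_two_tstar_gamma by (simp add: mult.assoc)
qed

lemma Istar_eq_poisson_rates:
  "Istar NR Ns eta gamma = poisson_rate (eta / 2) (eta * qstar NR Ns eta gamma / 2)
     + poisson_rate (gamma * vstar NR Ns eta gamma / 2) (real NR + eta * qstar NR Ns eta gamma / 2)
     + poisson_rate (vstar NR Ns eta gamma / 2) (real NR * (real Ns - 1))"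
proof -
  let ?q = "qstar NR Ns eta gamma" and ?v = "vstar NR Ns eta gamma"
  have pos: "2 * real NR + eta * ?q > 0"
    using qstar_pos eta add_nonneg_pos[of "2 * real NR" "eta * ?q"] by simp
  have gv: "gamma * ?v / 2 = ?q * (real NR + eta * ?q / 2)"
    unfolding vstar_eq using gamma by (simp add: field_simps)
  have "(real NR + eta * ?q / 2) / (gamma * ?v / 2) = 1 / ?q"
    unfolding gv using pos by simp
  then have "ln ((real NR + eta * ?q / 2) / (gamma * ?v / 2)) = - ln ?q"
    using qstar_pos by (simp add: ln_div)
  moreover have "(gamma + 1) * ?v = 2 * real NR + eta * ?q + 2 * (real NR * (real Ns - 1))"
    using qstar_equation gamma unfolding vstar_eq by (simp add: field_simps)
  moreover have "ln ((eta * ?q / 2) / (eta / 2)) = ln ?q"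
    using eta by simp
  moreover have "ln (real NR * (real Ns - 1) / (?v / 2)) = ln (2 * real NR * (real Ns - 1) / ?v)"
    by (simp add: field_simps)
  ultimately show ?thesis
    unfolding Istar_eq_qstar poisson_rate_def by (simp add: algebra_simps)
qed

lemma tstar_pos:
  assumes "gamma < (2 * real NR + eta) / (2 * real NR * (real Ns - 1))"
  shows "tstar NR Ns eta gamma > 0"
  unfolding tstar_def using qstar_lt_1[OF assms] qstar_pos by simp

lemma tstar_admissible: "1 + 2 * tstar NR Ns eta gamma > 0" "2 * tstar NR Ns eta gamma * gamma < 1"
proof -
  show "1 + 2 * tstar NR Ns eta gamma > 0"
    unfolding one_plus_two_tstar using qstar_pos by simp
  have "1 - 2 * tstar NR Ns eta gamma * gamma > 0"
    unfolding one_minus_two_tstar_gamma using vstar_pos NR Ns by simp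
  then show "2 * tstar NR Ns eta gamma * gamma < 1"
    by simp
qed

lemma chernoff_exponent_le_tstar:
  assumes "1 + 2 * s > 0" and "2 * s * gamma < 1"
  shows "chernoff_exponent NR Ns eta gamma s \<le> chernoff_exponent NR Ns eta gamma (tstar NR Ns eta gamma)"
proof -
  let ?q = "qstar NR Ns eta gamma" and ?v = "vstar NR Ns eta gamma" and ?t = "tstar NR Ns eta gamma"
  have "2 * real NR / (1 + 2 * ?t) + eta / (1 + 2 * ?t)\<^sup>2
      - 2 * gamma * (real NR * (real Ns - 1)) / (1 - 2 * ?t * gamma) = ?q * (2 * real NR + eta * ?q) - gamma * ?v"
    unfolding one_plus_two_tstar one_minus_two_tstar_gamma using NR Ns vstar_pos
    by (simp add: power2_eq_square field_simps)
  also have "\<dots> = 0"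
    unfolding vstar_eq using gamma by simp
  finally have "2 * real NR / (1 + 2 * ?t) + eta / (1 + 2 * ?t)\<^sup>2
      - 2 * gamma * (real NR * (real Ns - 1)) / (1 - 2 * ?t * gamma) = 0" .
  moreover have "chernoff_exponent NR Ns eta gamma s \<le> chernoff_exponent NR Ns eta gamma ?t
      + (s - ?t) * (2 * real NR / (1 + 2 * ?t) + eta / (1 + 2 * ?t)\<^sup>2
                    - 2 * gamma * (real NR * (real Ns - 1)) / (1 - 2 * ?t * gamma))"
    by (rule chernoff_exponent_le_tangent) (use assms tstar_admissible eta Ns in auto)
  ultimately show ?thesis
    by simp
qed

end

lemma Istar_mono_eta:
  assumes "NR \<ge> 1" and "Ns \<ge> 2" and "gamma > 0"
  shows "mono_on {e. e > 0 \<and> gamma < (2 * real NR + e) / (2 * real NR * (real Ns - 1))}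
    (\<lambda>e. Istar NR Ns e gamma)"
proof (rule mono_onI)
  fix r s
  assume "r \<in> {e. e > 0 \<and> gamma < (2 * real NR + e) / (2 * real NR * (real Ns - 1))}"
    and "s \<in> {e. e > 0 \<and> gamma < (2 * real NR + e) / (2 * real NR * (real Ns - 1))}" and "r \<le> s"
  then have "r > 0" and "s > 0" and below: "gamma < (2 * real NR + r) / (2 * real NR * (real Ns - 1))"
    by auto
  let ?t = "tstar NR Ns r gamma"
  have "?t > 0"
    using tstar_pos[OF assms(1,2) \<open>r > 0\<close> assms(3) below] .
  text \<open>For \<open>t > 0\<close> the Chernoff exponent increases with \<open>\<eta>\<close>, and \<open>I\<^sup>*\<close> is its maximum over \<open>t\<close>.\<close>
  have "Istar NR Ns r gamma = chernoff_exponent NR Ns r gamma ?t"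
    using Istar_eq_chernoff_exponent[OF assms(1,2) \<open>r > 0\<close> assms(3)] .
  also have "\<dots> \<le> chernoff_exponent NR Ns s gamma ?t"
    unfolding chernoff_exponent_def using \<open>?t > 0\<close> \<open>r \<le> s\<close>
    by (simp add: divide_right_mono mult_right_mono)
  also have "\<dots> \<le> chernoff_exponent NR Ns s gamma (tstar NR Ns s gamma)"
    using assms \<open>r > 0\<close> \<open>s > 0\<close> tstar_admissible[of NR Ns r gamma]
    by (intro chernoff_exponent_le_tstar) auto
  also have "\<dots> = Istar NR Ns s gamma"
    using Istar_eq_chernoff_exponent[OF assms(1,2) \<open>s > 0\<close> assms(3)] by simp
  finally show "Istar NR Ns r gamma \<le> Istar NR Ns s gamma" .
qed

lemma tendsto_miss_rate_below_threshold:
  assumes "NR \<ge> 1" and "Ns \<ge> 2" and "eta > 0" and "gamma > 0"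
    and "gamma < (2 * real NR + eta) / (2 * real NR * (real Ns - 1))"
  shows "(\<lambda>L. - (1 / real L) * ln (p_miss NR Ns L eta gamma)) \<longlonglongrightarrow> Istar NR Ns eta gamma"
proof -
  note setting = assms(1-4)
  let ?q = "qstar NR Ns eta gamma" and ?v = "vstar NR Ns eta gamma" and ?t = "tstar NR Ns eta gamma"
  have "(\<lambda>L. - (1 / real L) * ln (p_miss NR Ns L eta gamma)) \<longlonglongrightarrow> chernoff_exponent NR Ns eta gamma ?t"
    using setting tstar_pos[OF assms] tstar_admissible[OF setting] qstar_pos[OF setting] vstar_pos[OF setting]
    by (intro tendsto_miss_rate[where a = "gamma * ?v" and b = ?v and c = "eta * ?q / 2"])
      (auto simp: Istar_eq_chernoff_exponent[OF setting, symmetric] Istar_eq_poisson_rates[OF setting])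
  then show ?thesis
    by (simp add: Istar_eq_chernoff_exponent[OF setting])
qed

lemma tendsto_miss_rate_above_threshold:
  assumes "NR \<ge> 1" and "Ns \<ge> 2" and "eta > 0" and "gamma > 0"
    and "\<not> gamma < (2 * real NR + eta) / (2 * real NR * (real Ns - 1))"
  shows "(\<lambda>L. - (1 / real L) * ln (p_miss NR Ns L eta gamma)) \<longlonglongrightarrow> 0"
proof -
  have "2 * real NR + eta \<le> gamma * (2 * (real NR * (real Ns - 1)))"
    using assms by (simp add: not_less pos_divide_le_eq mult_ac)
  then have "(\<lambda>L. - (1 / real L) * ln (p_miss NR Ns L eta gamma)) \<longlonglongrightarrow> chernoff_exponent NR Ns eta gamma 0"
    using assms by (intro tendsto_miss_rate[where a = "2 * real NR + eta"
        and b = "2 * (real NR * (real Ns - 1))" and c = "eta / 2"])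
      (auto simp: chernoff_exponent_def poisson_rate_def field_simps)
  then show ?thesis
    by (simp add: chernoff_exponent_def)
qed

theorem proposition3:
  fixes NR Ns :: nat and eta gamma :: real
  assumes "NR \<ge> 1" and "Ns \<ge> 2" and "eta > 0" and "gamma > 0"
  shows "((\<lambda>L. - (1 / real L) * ln (p_miss NR Ns L eta gamma)) \<longlongrightarrow>
            (if gamma < (2 * real NR + eta) / (2 * real NR * (real Ns - 1))
             then Istar NR Ns eta gamma else 0)) sequentially
         \<and> mono_on {e. e > 0 \<and> gamma < (2 * real NR + e) / (2 * real NR * (real Ns - 1))}
                   (\<lambda>e. Istar NR Ns e gamma)"
  using assms tendsto_miss_rate_below_threshold[OF assms] tendsto_miss_rate_above_threshold[OF assms]
    Istar_mono_eta[OF assms(1,2,4)]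
  by simp

end
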